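(* Let $\mu\in\Delta(S)$ and let $(\pi^{(t)})$ be the iterates of Algorithm SMISBR with parameter $\tau>0$, and suppose the algorithm does not stop at step $t$. Then for every $i\in I$, $$\max_{\pi_i'\in\Pi_i}V_i(\mu,\pi_i',\pi_{-i}^{(t)})-V_i(\mu,\pi^{(t)})\le\frac{1}{1-\delta}\Big(\Delta_{\bar i_t}^{(t)}(\bar s_t)+2\tau\log\bar A\Big),$$ where $\bar A=\max_i|A_i|$.
   Context: Markov game $\langle I,S,(A_i),(u_i),P,\delta\rangle$ with finite $I,S,A_i$, $\delta\in(0,1)$; stationary policies $\pi_i$ with $\pi_i(s)\in\Delta(A_i)$, sets $\Pi_i$, $\pi_{-i}(s,a_{-i})=\prod_{j\neq i}\pi_j(s,a_j)$. $V_i(\mu,\pi)=\mathbb E[\sum_k\delta^ku_i(s^k,a^k)]$ with $s^0\sim\mu$, $a^k\sim\pi(s^k)$, $s^{k+1}\sim P(\cdot|s^k,a^k)$. $\nu_i(s,\pi_i)=\sum_{a_i}\pi_i(s,a_i)\log\pi_i(s,a_i)$. $\tilde V_i(s,\pi)=\mathbb E[\sum_k\delta^k(u_i(s^k,a^k)-\tau\nu_i(s^k,\pi_i))\mid s^0=s]$. $\tilde Q_i(s,a_i;\pi)=\sum_{a_{-i}}\pi_{-i}(s,a_{-i})\big(u_i(s,a)-\tau\nu_i(s,\pi_i)+\delta\sum_{s'}P(s'|s,a)\tilde V_i(s',\pi)\big)$; $\tilde Q_i^{(t)}(s,p)=\sum_{a_i}p(a_i)\tilde Q_i(s,a_i;\pi^{(t)})$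 for $p\in\Delta(A_i)$. Algorithm SMISBR with $\tau>0$: $\pi_i^{(0)}(s,a_i)=1/|A_i|$. At step $t$: $BR_i^{(t)}(s,a_i)=\exp(\tilde Q_i(s,a_i;\pi^{(t)})/\tau)/\sum_{a'}\exp(\tilde Q_i(s,a';\pi^{(t)})/\tau)$; $\Delta_i^{(t)}(s)=\max_{p\in\Delta(A_i)}(\tilde Q_i^{(t)}(s,p)-\tau\nu_i(s,p))-(\tilde Q_i^{(t)}(s,\pi_i^{(t)}(s))-\tau\nu_i(s,\pi_i^{(t)}))$. If all $\Delta_i^{(t)}(s)\le0$, stop. Else choose $(\bar i_t,\bar s_t)\in\arg\max_{i,s}\Delta_i^{(t)}(s)$, set $\pi_{\bar i_t}^{(t+1)}(\bar s_t)=BR_{\bar i_t}^{(t)}(\bar s_t)$, leave all other components unchanged. *)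

theory Defs
  imports "HOL-Analysis.Analysis"
begin

text \<open>Joint actions are functions  a :: 'i => 'a  with  a i \<in> A i  (i.e. elements of PiE I A).
  trans G s a s' is the transition probability P(s'|s,a).\<close>

record ('i, 's, 'a) mgame =
  players :: "'i set"
  states  :: "'s set"
  acts    :: "'i \<Rightarrow> 'a set"
  rew     :: "'i \<Rightarrow> 's \<Rightarrow> ('i \<Rightarrow> 'a) \<Rightarrow> real"
  trans   :: "'s \<Rightarrow> ('i \<Rightarrow> 'a) \<Rightarrow> 's \<Rightarrow> real"
  disc    :: real

definition joint_acts :: "('i, 's, 'a) mgame \<Rightarrow> ('i \<Rightarrow> 'a) set" where
  "joint_acts G = PiE (players G) (acts G)"

definition prob_simplex :: "'x set \<Rightarrow> ('x \<Rightarrow> real) set" where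
  "prob_simplex X = {p. (\<forall>x\<in>X. 0 \<le> p x) \<and> (\<Sum>x\<in>X. p x) = 1}"

definition markov_game :: "('i, 's, 'a) mgame \<Rightarrow> bool" where
  "markov_game G \<longleftrightarrow>
     finite (players G) \<and> finite (states G) \<and> states G \<noteq> {} \<and>
     (\<forall>i\<in>players G. finite (acts G i) \<and> acts G i \<noteq> {}) \<and>
     0 < disc G \<and> disc G < 1 \<and>
     (\<forall>s\<in>states G. \<forall>a\<in>joint_acts G. trans G s a \<in> prob_simplex (states G))"

text \<open>Stationary policies: pol i s a = pi_i(s, a).  The set Pi_i of stationary policies of player i.\<close>
type_synonym ('i, 's, 'a) profile = "'i \<Rightarrow> 's \<Rightarrow> 'a \<Rightarrow> real"

definition Pol :: "('i, 's, 'a) mgame \<Rightarrow> 'i \<Rightarrow> ('s \<Rightarrow> 'a \<Rightarrow> real) set" where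
  "Pol G i = {p. \<forall>s\<in>states G. p s \<in> prob_simplex (acts G i)}"

definition joint_prob :: "('i, 's, 'a) mgame \<Rightarrow> ('i, 's, 'a) profile \<Rightarrow> 's \<Rightarrow> ('i \<Rightarrow> 'a) \<Rightarrow> real" where
  "joint_prob G pol s a = (\<Prod>i\<in>players G. pol i s (a i))"

text \<open>Distribution of the state s^k when s^0 ~ mu, a^k ~ pi(s^k), s^(k+1) ~ P(.|s^k,a^k).\<close>
primrec state_dist :: "('i, 's, 'a) mgame \<Rightarrow> ('i, 's, 'a) profile \<Rightarrow> ('s \<Rightarrow> real) \<Rightarrow> nat \<Rightarrow> 's \<Rightarrow> real" where
  "state_dist G pol mu 0 = mu"
| "state_dist G pol mu (Suc k) = (\<lambda>s'. \<Sum>s\<in>states G. state_dist G pol mu k s *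
      (\<Sum>a\<in>joint_acts G. joint_prob G pol s a * trans G s a s'))"

definition disc_val :: "('i, 's, 'a) mgame \<Rightarrow> ('i, 's, 'a) profile \<Rightarrow> ('s \<Rightarrow> real) \<Rightarrow>
    ('s \<Rightarrow> ('i \<Rightarrow> 'a) \<Rightarrow> real) \<Rightarrow> real" where
  "disc_val G pol mu r = (\<Sum>k. disc G ^ k * (\<Sum>s\<in>states G. state_dist G pol mu k s *
      (\<Sum>a\<in>joint_acts G. joint_prob G pol s a * r s a)))"

definition V :: "('i, 's, 'a) mgame \<Rightarrow> 'i \<Rightarrow> ('s \<Rightarrow> real) \<Rightarrow> ('i, 's, 'a) profile \<Rightarrow> real" where
  "V G i mu pol = disc_val G pol mu (rew G i)"

text \<open>nu_i(s, p) = sum_a p(a) log p(a)  (with ln 0 = 0, so 0 log 0 = 0)\<close>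
definition negent :: "('i, 's, 'a) mgame \<Rightarrow> 'i \<Rightarrow> ('a \<Rightarrow> real) \<Rightarrow> real" where
  "negent G i p = (\<Sum>a\<in>acts G i. p a * ln (p a))"

definition Vt :: "('i, 's, 'a) mgame \<Rightarrow> real \<Rightarrow> 'i \<Rightarrow> 's \<Rightarrow> ('i, 's, 'a) profile \<Rightarrow> real" where
  "Vt G tau i s pol = disc_val G pol (\<lambda>s'. if s' = s then 1 else 0)
      (\<lambda>s' a. rew G i s' a - tau * negent G i (pol i s'))"

definition Qt :: "('i, 's, 'a) mgame \<Rightarrow> real \<Rightarrow> 'i \<Rightarrow> 's \<Rightarrow> 'a \<Rightarrow> ('i, 's, 'a) profile \<Rightarrow> real" where
  "Qt G tau i s ai pol =
     (\<Sum>b\<in>PiE (players G - {i}) (acts G).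
        (\<Prod>j\<in>players G - {i}. pol j s (b j)) *
        (rew G i s (b(i := ai)) - tau * negent G i (pol i s)
         + disc G * (\<Sum>s'\<in>states G. trans G s (b(i := ai)) s' * Vt G tau i s' pol)))"

definition Qtp :: "('i, 's, 'a) mgame \<Rightarrow> real \<Rightarrow> 'i \<Rightarrow> 's \<Rightarrow> ('a \<Rightarrow> real) \<Rightarrow> ('i, 's, 'a) profile \<Rightarrow> real" where
  "Qtp G tau i s p pol = (\<Sum>ai\<in>acts G i. p ai * Qt G tau i s ai pol)"

definition BR :: "('i, 's, 'a) mgame \<Rightarrow> real \<Rightarrow> ('i, 's, 'a) profile \<Rightarrow> 'i \<Rightarrow> 's \<Rightarrow> 'a \<Rightarrow> real" where
  "BR G tau pol i s ai = exp (Qt G tau i s ai pol / tau) /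
      (\<Sum>a'\<in>acts G i. exp (Qt G tau i s a' pol / tau))"

definition Gap :: "('i, 's, 'a) mgame \<Rightarrow> real \<Rightarrow> ('i, 's, 'a) profile \<Rightarrow> 'i \<Rightarrow> 's \<Rightarrow> real" where
  "Gap G tau pol i s =
     (SUP p\<in>prob_simplex (acts G i). Qtp G tau i s p pol - tau * negent G i p)
     - (Qtp G tau i s (pol i s) pol - tau * negent G i (pol i s))"

definition not_stopped :: "('i, 's, 'a) mgame \<Rightarrow> real \<Rightarrow> ('i, 's, 'a) profile \<Rightarrow> bool" where
  "not_stopped G tau pol \<longleftrightarrow> (\<exists>i\<in>players G. \<exists>s\<in>states G. Gap G tau pol i s > 0)"

definition is_argmax_gap :: "('i, 's, 'a) mgame \<Rightarrow> real \<Rightarrow> ('i, 's, 'a) profile \<Rightarrow> 'i \<Rightarrow> 's \<Rightarrow> bool" where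
  "is_argmax_gap G tau pol ib sb \<longleftrightarrow> ib \<in> players G \<and> sb \<in> states G \<and>
     (\<forall>i\<in>players G. \<forall>s\<in>states G. Gap G tau pol i s \<le> Gap G tau pol ib sb)"

text \<open>Policies are only constrained on their meaningful domain (i in I, s in S, a in A_i).\<close>
definition smisbr_run :: "('i, 's, 'a) mgame \<Rightarrow> real \<Rightarrow> (nat \<Rightarrow> ('i, 's, 'a) profile) \<Rightarrow>
    (nat \<Rightarrow> 'i) \<Rightarrow> (nat \<Rightarrow> 's) \<Rightarrow> nat \<Rightarrow> bool" where
  "smisbr_run G tau pit ib sb t \<longleftrightarrow>
     (\<forall>i\<in>players G. \<forall>s\<in>states G. \<forall>a\<in>acts G i. pit 0 i s a = 1 / real (card (acts G i))) \<and>
     (\<forall>k<t. not_stopped G tau (pit k) \<and> is_argmax_gap G tau (pit k) (ib k) (sb k) \<and>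
        (\<forall>i\<in>players G. \<forall>s\<in>states G. \<forall>a\<in>acts G i.
           pit (Suc k) i s a = (if i = ib k \<and> s = sb k then BR G tau (pit k) i s a else pit k i s a)))"

definition maxA :: "('i, 's, 'a) mgame \<Rightarrow> nat" where
  "maxA G = Max ((\<lambda>i. card (acts G i)) ` players G)"

end

theory Submission
  imports Defs
begin

text \<open>
  Fix a player \<open>i\<close> and the current profile \<open>\<pi>\<close>, and let \<open>W = Vt i \<pi>\<close> be its regularized
  value. For every stationary profile \<open>\<pi>'\<close>, the value \<open>V i \<mu> \<pi>'\<close> minus \<open>E\<^sub>\<mu> W\<close> telescopes
  into the discounted sum, along the state distributions of \<open>\<pi>'\<close>, of the one-step advantages
  \<open>E\<^sub>\<pi>'[r + \<delta> P W] - W\<close>. For \<open>\<pi>' = \<pi>\<close> the advantage at \<open>s\<close> is the Bellman residual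
  \<open>\<tau> \<nu>\<^sub>i(s, \<pi>\<^sub>i) \<ge> -\<tau> log |A\<^sub>i|\<close>. For a unilateral deviation \<open>\<pi>' = (p, \<pi>\<^sub>-\<^sub>i)\<close> it equals the
  improvement of \<open>p(s)\<close> over \<open>\<pi>\<^sub>i(s)\<close> in the entropy-regularized one-state problem defining
  \<open>\<Delta>\<^sub>i(s)\<close>, plus \<open>\<tau> \<nu>\<^sub>i(s, p) \<le> 0\<close>; hence it is at most the maximal gap \<open>\<Delta>\<^sub>i\<^sub>t(s\<^sub>t)\<close>.
  Summing the geometric series gives the bound, in fact with \<open>\<tau> log A\<close> instead of \<open>2 \<tau> log A\<close>.
\<close>

abbreviation dirac :: "'s \<Rightarrow> 's \<Rightarrow> real" where
  "dirac s \<equiv> \<lambda>s'. if s' = s then 1 else 0"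

abbreviation joint_expect ::
    "('i, 's, 'a) mgame \<Rightarrow> ('i, 's, 'a) profile \<Rightarrow> 's \<Rightarrow> (('i \<Rightarrow> 'a) \<Rightarrow> real) \<Rightarrow> real" where
  "joint_expect G \<sigma> s F \<equiv> \<Sum>a\<in>joint_acts G. joint_prob G \<sigma> s a * F a"

abbreviation backup ::
    "('i, 's, 'a) mgame \<Rightarrow> ('s \<Rightarrow> ('i \<Rightarrow> 'a) \<Rightarrow> real) \<Rightarrow> ('s \<Rightarrow> real) \<Rightarrow> 's \<Rightarrow> ('i \<Rightarrow> 'a) \<Rightarrow> real"
  where "backup G r W s a \<equiv> r s a + disc G * (\<Sum>x\<in>states G. trans G s a x * W x)"

definition valid_profile :: "('i, 's, 'a) mgame \<Rightarrow> ('i, 's, 'a) profile \<Rightarrow> bool" where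
  "valid_profile G \<sigma> \<longleftrightarrow> (\<forall>j\<in>players G. \<sigma> j \<in> Pol G j)"

lemma markov_gameD:
  assumes "markov_game G"
  shows "finite (players G)" "finite (states G)"
    "\<And>i. i \<in> players G \<Longrightarrow> finite (acts G i)" "\<And>i. i \<in> players G \<Longrightarrow> acts G i \<noteq> {}"
    "0 < disc G" "disc G < 1"
    "\<And>s a. s \<in> states G \<Longrightarrow> a \<in> joint_acts G \<Longrightarrow> trans G s a \<in> prob_simplex (states G)"
  using assms unfolding markov_game_def by auto

lemma valid_profileD:
  "valid_profile G \<sigma> \<Longrightarrow> j \<in> players G \<Longrightarrow> s \<in> states G \<Longrightarrow> \<sigma> j s \<in> prob_simplex (acts G j)"
  unfolding valid_profile_def Pol_def by auto

lemma valid_profile_update: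
  "valid_profile G \<sigma> \<Longrightarrow> p \<in> Pol G i \<Longrightarrow> valid_profile G (\<sigma>(i := p))"
  unfolding valid_profile_def by auto

lemma prob_simplex_nonneg: "p \<in> prob_simplex X \<Longrightarrow> x \<in> X \<Longrightarrow> 0 \<le> p x"
  and prob_simplex_sum: "p \<in> prob_simplex X \<Longrightarrow> (\<Sum>x\<in>X. p x) = 1"
  unfolding prob_simplex_def by auto

lemma prob_simplex_finite: "p \<in> prob_simplex X \<Longrightarrow> finite X"
  using prob_simplex_sum[of p X] by (cases "finite X") auto

lemma prob_simplex_le_one:
  assumes "p \<in> prob_simplex X" "x \<in> X"
  shows "p x \<le> 1"
proof -
  have "p x \<le> (\<Sum>y\<in>X. p y)"
    using assms prob_simplex_finite prob_simplex_nonneg by (intro member_le_sum) auto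
  then show ?thesis using prob_simplex_sum[OF assms(1)] by simp
qed

lemma prob_simplex_cong:
  "(\<And>x. x \<in> X \<Longrightarrow> p x = q x) \<Longrightarrow> q \<in> prob_simplex X \<Longrightarrow> p \<in> prob_simplex X"
  unfolding prob_simplex_def by auto

lemma uniform_in_prob_simplex:
  "finite X \<Longrightarrow> X \<noteq> {} \<Longrightarrow> (\<lambda>_. 1 / real (card X)) \<in> prob_simplex X"
  unfolding prob_simplex_def by simp

lemma dirac_in_prob_simplex: "finite X \<Longrightarrow> s \<in> X \<Longrightarrow> dirac s \<in> prob_simplex X"
  unfolding prob_simplex_def by (simp add: sum.delta')

lemma product_in_prob_simplex:
  assumes "finite J" "\<And>j. j \<in> J \<Longrightarrow> p j \<in> prob_simplex (A j)"
  shows "(\<lambda>b. \<Prod>j\<in>J. p j (b j)) \<in> prob_simplex (PiE J A)"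
proof -
  have "(\<Sum>b\<in>PiE J A. \<Prod>j\<in>J. p j (b j)) = (\<Prod>j\<in>J. \<Sum>x\<in>A j. p j x)"
    using assms prob_simplex_finite by (intro prod_sum_PiE[symmetric]) auto
  also have "\<dots> = 1" by (rule prod.neutral) (simp add: assms(2) prob_simplex_sum)
  moreover have "0 \<le> (\<Prod>j\<in>J. p j (b j))" if "b \<in> PiE J A" for b
    using assms(2) that by (intro prod_nonneg) (auto simp: PiE_iff prob_simplex_def)
  ultimately show ?thesis unfolding prob_simplex_def by auto
qed

lemma expectation_le_const:
  assumes "p \<in> prob_simplex X" "\<And>x. x \<in> X \<Longrightarrow> h x \<le> c"
  shows "(\<Sum>x\<in>X. p x * h x) \<le> c"
proof -
  have "(\<Sum>x\<in>X. p x * h x) \<le> (\<Sum>x\<in>X. p x * c)"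
    using assms prob_simplex_nonneg by (intro sum_mono mult_left_mono) auto
  also have "\<dots> = c" using prob_simplex_sum[OF assms(1)] by (simp add: sum_distrib_right[symmetric])
  finally show ?thesis .
qed

lemma expectation_ge_const:
  assumes "p \<in> prob_simplex X" "\<And>x. x \<in> X \<Longrightarrow> c \<le> h x"
  shows "c \<le> (\<Sum>x\<in>X. p x * h x)"
  using expectation_le_const[OF assms(1), of "\<lambda>x. - h x" "- c"] assms(2)
  by (simp add: sum_negf)

lemma abs_expectation_le:
  assumes "p \<in> prob_simplex X"
  shows "\<bar>\<Sum>x\<in>X. p x * h x\<bar> \<le> (\<Sum>x\<in>X. \<bar>h x\<bar>)"
proof -
  have "\<bar>\<Sum>x\<in>X. p x * h x\<bar> \<le> (\<Sum>x\<in>X. \<bar>p x * h x\<bar>)" by (rule sum_abs)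
  also have "\<dots> \<le> (\<Sum>x\<in>X. \<bar>h x\<bar>)"
  proof (rule sum_mono)
    fix x assume "x \<in> X"
    with assms have "0 \<le> p x" "p x \<le> 1" by (simp_all add: prob_simplex_nonneg prob_simplex_le_one)
    then show "\<bar>p x * h x\<bar> \<le> \<bar>h x\<bar>" by (simp add: abs_mult mult_left_le_one_le)
  qed
  finally show ?thesis .
qed

lemma sum_xlnx_nonpos:
  assumes "p \<in> prob_simplex X"
  shows "(\<Sum>x\<in>X. p x * ln (p x)) \<le> 0"
proof (rule sum_nonpos)
  fix x assume "x \<in> X"
  with assms have "0 \<le> p x" "p x \<le> 1" by (simp_all add: prob_simplex_nonneg prob_simplex_le_one)
  then show "p x * ln (p x) \<le> 0" by (cases "p x = 0") (auto intro: mult_nonneg_nonpos)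
qed

lemma sum_xlnx_ge_minus_ln_card:
  assumes "p \<in> prob_simplex X"
  shows "- ln (real (card X)) \<le> (\<Sum>x\<in>X. p x * ln (p x))"
proof -
  let ?n = "real (card X)"
  have n: "?n > 0"
    using assms prob_simplex_finite prob_simplex_sum by (fastforce simp: card_gt_0_iff)
  \<comment> \<open>\<open>ln y \<le> y - 1\<close> at \<open>y = 1 / (n p(x))\<close>, multiplied by \<open>p(x)\<close>\<close>
  have key: "- (p x * ln (p x)) \<le> 1 / ?n - p x + p x * ln ?n" if "x \<in> X" for x
  proof (cases "p x = 0")
    case False
    with that assms have px: "p x > 0" using prob_simplex_nonneg by fastforce
    have "ln (1 / (?n * p x)) \<le> 1 / (?n * p x) - 1" using n px by (intro ln_le_minus_one) simp
    moreover have "ln (1 / (?n * p x)) = - ln ?n - ln (p x)" using n px by (simp add: ln_div ln_mult)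
    ultimately have "p x * (- ln (p x)) \<le> p x * (1 / (?n * p x) - 1 + ln ?n)"
      using px by (intro mult_left_mono) auto
    then show ?thesis using px by (simp add: algebra_simps)
  qed (use n in simp)
  have "- (\<Sum>x\<in>X. p x * ln (p x)) \<le> (\<Sum>x\<in>X. 1 / ?n - p x + p x * ln ?n)"
    unfolding sum_negf[symmetric] using key by (rule sum_mono)
  also have "\<dots> = ln ?n"
    using n prob_simplex_sum[OF assms]
    by (simp add: sum.distrib sum_subtractf sum_distrib_right[symmetric])
  finally show ?thesis by simp
qed

lemma negent_nonpos: "q \<in> prob_simplex (acts G i) \<Longrightarrow> negent G i q \<le> 0"
  unfolding negent_def by (rule sum_xlnx_nonpos)

lemma negent_ge: "q \<in> prob_simplex (acts G i) \<Longrightarrow> - ln (real (card (acts G i))) \<le> negent G i q"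
  unfolding negent_def by (rule sum_xlnx_ge_minus_ln_card)

lemma summable_geometric_bounded:
  fixes f :: "nat \<Rightarrow> real"
  assumes "\<And>k. \<bar>f k\<bar> \<le> C" "0 \<le> q" "q < 1"
  shows "summable (\<lambda>k. q ^ k * f k)"
proof (rule summable_comparison_test[where g="\<lambda>k. C * q ^ k"])
  show "\<exists>N. \<forall>n\<ge>N. norm (q ^ n * f n) \<le> C * q ^ n"
    using assms by (auto simp: abs_mult mult.commute intro!: mult_right_mono)
  show "summable (\<lambda>k. C * q ^ k)" using assms by (intro summable_mult summable_geometric) auto
qed

lemma sums_geometric_le:
  fixes f :: "nat \<Rightarrow> real"
  assumes "(\<lambda>k. q ^ k * f k) sums L" "\<And>k. f k \<le> c" "0 \<le> q" "q < 1"
  shows "L \<le> c / (1 - q)"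
proof (rule sums_le[OF _ assms(1)])
  show "(\<lambda>k. q ^ k * c) sums (c / (1 - q))"
    using sums_mult2[OF geometric_sums[of q], of c] assms(3,4) by simp
  show "q ^ k * f k \<le> q ^ k * c" for k using assms(2,3) by (simp add: mult_left_mono)
qed

lemma sums_geometric_ge:
  fixes f :: "nat \<Rightarrow> real"
  assumes "(\<lambda>k. q ^ k * f k) sums L" "\<And>k. c \<le> f k" "0 \<le> q" "q < 1"
  shows "c / (1 - q) \<le> L"
proof -
  have "(\<lambda>k. q ^ k * - f k) sums - L" using sums_minus[OF assms(1)] by simp
  then show ?thesis using sums_geometric_le[of q "\<lambda>k. - f k" "- L" "- c"] assms(2-4) by simp
qed

lemma joint_prob_in_prob_simplex:
  assumes "markov_game G" "valid_profile G \<sigma>" "s \<in> states G"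
  shows "joint_prob G \<sigma> s \<in> prob_simplex (joint_acts G)"
  unfolding joint_prob_def[abs_def] joint_acts_def
  by (rule product_in_prob_simplex) (use assms markov_gameD(1) valid_profileD in auto)

lemma others_prob_in_prob_simplex:
  assumes "markov_game G" "valid_profile G \<sigma>" "s \<in> states G"
  shows "(\<lambda>b. \<Prod>j\<in>players G - {i}. \<sigma> j s (b j)) \<in> prob_simplex (PiE (players G - {i}) (acts G))"
  by (rule product_in_prob_simplex) (use assms markov_gameD(1) valid_profileD in auto)

lemma joint_expect_split:
  assumes "finite (players G)" "i \<in> players G"
  shows "joint_expect G \<sigma> s F =
    (\<Sum>ai\<in>acts G i. \<sigma> i s ai * (\<Sum>b\<in>PiE (players G - {i}) (acts G).
        (\<Prod>j\<in>players G - {i}. \<sigma> j s (b j)) * F (b(i := ai))))"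
proof -
  let ?J = "players G - {i}"
  have I: "players G = insert i ?J" using assms(2) by auto
  have jp: "joint_prob G \<sigma> s (g(i := y)) = \<sigma> i s y * (\<Prod>j\<in>?J. \<sigma> j s (g j))" for g y
  proof -
    have "joint_prob G \<sigma> s (g(i := y)) = \<sigma> i s y * (\<Prod>j\<in>?J. \<sigma> j s ((g(i := y)) j))"
      unfolding joint_prob_def by (subst I, subst prod.insert) (use assms(1) in auto)
    also have "(\<Prod>j\<in>?J. \<sigma> j s ((g(i := y)) j)) = (\<Prod>j\<in>?J. \<sigma> j s (g j))"
      by (rule prod.cong) auto
    finally show ?thesis .
  qed
  have "joint_expect G \<sigma> s F =
      (\<Sum>a\<in>(\<lambda>(y, g). g(i := y)) ` (acts G i \<times> PiE ?J (acts G)). joint_prob G \<sigma> s a * F a)"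
    unfolding joint_acts_def by (subst I, subst PiE_insert_eq) simp
  also have "\<dots> = (\<Sum>(y, g)\<in>acts G i \<times> PiE ?J (acts G). joint_prob G \<sigma> s (g(i := y)) * F (g(i := y)))"
    using inj_combinator[of i ?J "acts G"] by (subst sum.reindex) (auto simp: case_prod_unfold)
  also have "\<dots> = (\<Sum>y\<in>acts G i. \<Sum>g\<in>PiE ?J (acts G). \<sigma> i s y * ((\<Prod>j\<in>?J. \<sigma> j s (g j)) * F (g(i := y))))"
    unfolding sum.cartesian_product jp by (simp add: mult.assoc)
  finally show ?thesis by (simp add: sum_distrib_left)
qed

subsection \<open>State distributions and discounted values\<close>

lemma sum_mixture:
  fixes m :: "'y \<Rightarrow> 'r::semiring_0"
  shows "(\<Sum>x\<in>X. (\<Sum>y\<in>Y. m y * g y x) * h x) = (\<Sum>y\<in>Y. m y * (\<Sum>x\<in>X. g y x * h x))"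
proof -
  have "(\<Sum>x\<in>X. (\<Sum>y\<in>Y. m y * g y x) * h x) = (\<Sum>x\<in>X. \<Sum>y\<in>Y. m y * (g y x * h x))"
    by (simp only: sum_distrib_right mult.assoc)
  also have "\<dots> = (\<Sum>y\<in>Y. \<Sum>x\<in>X. m y * (g y x * h x))" by (rule sum.swap)
  finally show ?thesis by (simp only: sum_distrib_left)
qed

lemma sum_dirac_mult: "finite X \<Longrightarrow> s \<in> X \<Longrightarrow> (\<Sum>y\<in>X. dirac s y * f y) = f s"
  by (simp add: if_distrib[of "\<lambda>z. z * _"] sum.delta cong: if_cong)

lemma state_dist_Suc_expectation:
  "(\<Sum>x\<in>states G. state_dist G \<sigma> mu (Suc k) x * W x) =
   (\<Sum>s\<in>states G. state_dist G \<sigma> mu k s *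
      joint_expect G \<sigma> s (\<lambda>a. \<Sum>x\<in>states G. trans G s a x * W x))"
  by (simp only: state_dist.simps sum_mixture)

lemma state_dist_in_prob_simplex:
  assumes mg: "markov_game G" and \<sigma>: "valid_profile G \<sigma>" and mu: "mu \<in> prob_simplex (states G)"
  shows "state_dist G \<sigma> mu k \<in> prob_simplex (states G)"
proof (induction k)
  case 0 then show ?case using mu by simp
next
  case (Suc k)
  have "(\<Sum>x\<in>states G. state_dist G \<sigma> mu (Suc k) x * 1)
      = (\<Sum>s\<in>states G. state_dist G \<sigma> mu k s * joint_expect G \<sigma> s (\<lambda>a. \<Sum>x\<in>states G. trans G s a x * 1))"
    by (rule state_dist_Suc_expectation)
  also have "\<dots> = (\<Sum>s\<in>states G. state_dist G \<sigma> mu k s)"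
    using markov_gameD(7)[OF mg] joint_prob_in_prob_simplex[OF mg \<sigma>]
    by (intro sum.cong) (simp_all add: prob_simplex_sum)
  finally have "(\<Sum>x\<in>states G. state_dist G \<sigma> mu (Suc k) x) = 1"
    using Suc prob_simplex_sum by simp
  moreover have "0 \<le> state_dist G \<sigma> mu (Suc k) x" if "x \<in> states G" for x
    using Suc that prob_simplex_nonneg[OF markov_gameD(7)[OF mg]]
      prob_simplex_nonneg[OF joint_prob_in_prob_simplex[OF mg \<sigma>]]
    by (auto intro!: sum_nonneg mult_nonneg_nonneg simp: prob_simplex_nonneg)
  ultimately show ?case unfolding prob_simplex_def by auto
qed

lemma state_dist_Suc_shift:
  "state_dist G \<sigma> mu (Suc k) = state_dist G \<sigma> (state_dist G \<sigma> mu (Suc 0)) k"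
  by (induction k) simp_all

lemma state_dist_decompose:
  assumes "finite (states G)" "x \<in> states G"
  shows "state_dist G \<sigma> mu k x = (\<Sum>y\<in>states G. mu y * state_dist G \<sigma> (dirac y) k x)"
  using assms(2)
proof (induction k arbitrary: x)
  case 0
  have "(\<Sum>y\<in>states G. mu y * dirac y x) = (\<Sum>y\<in>states G. dirac x y * mu y)"
    by (intro sum.cong) auto
  then show ?case using sum_dirac_mult[OF assms(1) 0] by simp
next
  case (Suc k)
  have "state_dist G \<sigma> mu (Suc k) x = (\<Sum>s\<in>states G.
      (\<Sum>y\<in>states G. mu y * state_dist G \<sigma> (dirac y) k s) * joint_expect G \<sigma> s (\<lambda>a. trans G s a x))"
    using Suc.IH by simp
  then show ?case by (simp only: sum_mixture state_dist.simps)
qed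

lemma summable_disc_val:
  assumes "markov_game G" "valid_profile G \<sigma>" "mu \<in> prob_simplex (states G)"
  shows "summable (\<lambda>k. disc G ^ k * (\<Sum>s\<in>states G. state_dist G \<sigma> mu k s * h s))"
  using abs_expectation_le[OF state_dist_in_prob_simplex[OF assms]] markov_gameD[OF assms(1)]
  by (intro summable_geometric_bounded) auto

lemma disc_val_split_head:
  assumes mg: "markov_game G" and \<sigma>: "valid_profile G \<sigma>" and mu: "mu \<in> prob_simplex (states G)"
  shows "disc_val G \<sigma> mu r = (\<Sum>s\<in>states G. mu s * joint_expect G \<sigma> s (r s))
     + disc G * disc_val G \<sigma> (state_dist G \<sigma> mu (Suc 0)) r"
proof -
  let ?R = "\<lambda>s. joint_expect G \<sigma> s (r s)"
  define f where "f k = disc G ^ k * (\<Sum>s\<in>states G. state_dist G \<sigma> mu k s * ?R s)" for k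
  define g where
    "g k = disc G ^ k * (\<Sum>s\<in>states G. state_dist G \<sigma> (state_dist G \<sigma> mu (Suc 0)) k s * ?R s)" for k
  have "summable f" unfolding f_def by (rule summable_disc_val[OF mg \<sigma> mu])
  moreover have "summable g"
    unfolding g_def by (rule summable_disc_val[OF mg \<sigma> state_dist_in_prob_simplex[OF mg \<sigma> mu]])
  moreover have "f (Suc k) = disc G * g k" for k
    unfolding f_def g_def by (subst state_dist_Suc_shift) simp
  ultimately have "suminf f = f 0 + disc G * suminf g"
    using suminf_split_head[of f] suminf_mult[of g "disc G"] by simp
  then show ?thesis unfolding disc_val_def f_def g_def by simp
qed

lemma disc_val_decompose:
  assumes mg: "markov_game G" and \<sigma>: "valid_profile G \<sigma>"
  shows "disc_val G \<sigma> mu r = (\<Sum>y\<in>states G. mu y * disc_val G \<sigma> (dirac y) r)"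
proof -
  let ?R = "\<lambda>s. joint_expect G \<sigma> s (r s)"
  define f where "f y k = disc G ^ k * (\<Sum>s\<in>states G. state_dist G \<sigma> (dirac y) k s * ?R s)" for y k
  have fin: "finite (states G)" using markov_gameD(2)[OF mg] .
  have sf: "summable (f y)" if "y \<in> states G" for y
    unfolding f_def using dirac_in_prob_simplex[OF fin that] by (rule summable_disc_val[OF mg \<sigma>])
  have "disc G ^ k * (\<Sum>s\<in>states G. state_dist G \<sigma> mu k s * ?R s) = (\<Sum>y\<in>states G. mu y * f y k)" for k
  proof -
    have "(\<Sum>s\<in>states G. state_dist G \<sigma> mu k s * ?R s)
        = (\<Sum>s\<in>states G. (\<Sum>y\<in>states G. mu y * state_dist G \<sigma> (dirac y) k s) * ?R s)"
      using state_dist_decompose[OF fin] by (intro sum.cong) auto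
    then show ?thesis unfolding f_def sum_mixture by (simp add: sum_distrib_left mult.left_commute)
  qed
  then have "disc_val G \<sigma> mu r = (\<Sum>k. \<Sum>y\<in>states G. mu y * f y k)"
    unfolding disc_val_def by simp
  also have "\<dots> = (\<Sum>y\<in>states G. \<Sum>k. mu y * f y k)"
    using sf by (intro suminf_sum summable_mult) auto
  also have "\<dots> = (\<Sum>y\<in>states G. mu y * disc_val G \<sigma> (dirac y) r)"
    using suminf_mult[OF sf] unfolding f_def disc_val_def by simp
  finally show ?thesis .
qed

lemma disc_val_bellman:
  assumes mg: "markov_game G" and \<sigma>: "valid_profile G \<sigma>" and s: "s \<in> states G"
  shows "disc_val G \<sigma> (dirac s) r =
    joint_expect G \<sigma> s (backup G r (\<lambda>x. disc_val G \<sigma> (dirac x) r) s)"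
proof -
  have fin: "finite (states G)" using markov_gameD(2)[OF mg] .
  let ?V = "\<lambda>x. disc_val G \<sigma> (dirac x) r"
  have step: "state_dist G \<sigma> (dirac s) (Suc 0) = (\<lambda>x. joint_expect G \<sigma> s (\<lambda>a. trans G s a x))"
    by (rule ext) (simp add: sum_dirac_mult[OF fin s])
  have "disc_val G \<sigma> (dirac s) r
      = joint_expect G \<sigma> s (r s) + disc G * disc_val G \<sigma> (state_dist G \<sigma> (dirac s) (Suc 0)) r"
    using disc_val_split_head[OF mg \<sigma> dirac_in_prob_simplex[OF fin s]] sum_dirac_mult[OF fin s]
    by simp
  also have "disc_val G \<sigma> (state_dist G \<sigma> (dirac s) (Suc 0)) r
      = (\<Sum>y\<in>states G. joint_expect G \<sigma> s (\<lambda>a. trans G s a y) * ?V y)"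
    by (rule trans[OF disc_val_decompose[OF mg \<sigma>]]) (simp only: step)
  also have "\<dots> = joint_expect G \<sigma> s (\<lambda>a. \<Sum>x\<in>states G. trans G s a x * ?V x)"
    by (rule sum_mixture)
  finally show ?thesis by (simp add: distrib_left sum.distrib sum_distrib_left mult.left_commute)
qed

text \<open>Performance difference: the potential \<open>W\<close> telescopes out of the discounted sum.\<close>

lemma disc_val_telescope:
  assumes mg: "markov_game G" and \<sigma>: "valid_profile G \<sigma>" and mu: "mu \<in> prob_simplex (states G)"
  shows "(\<lambda>k. disc G ^ k * (\<Sum>s\<in>states G. state_dist G \<sigma> mu k s *
      (joint_expect G \<sigma> s (backup G r W s) - W s)))
    sums (disc_val G \<sigma> mu r - (\<Sum>s\<in>states G. mu s * W s))"
proof -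
  let ?q = "disc G"
  let ?d = "state_dist G \<sigma> mu"
  define A where "A k = (\<Sum>s\<in>states G. ?d k s * joint_expect G \<sigma> s (r s))" for k
  define B where "B k = (\<Sum>s\<in>states G. ?d k s * W s)" for k
  have sA: "(\<lambda>k. ?q ^ k * A k) sums disc_val G \<sigma> mu r"
    unfolding disc_val_def A_def using summable_disc_val[OF mg \<sigma> mu] by (rule summable_sums)
  have "(\<lambda>k. ?q ^ k * B k) \<longlonglongrightarrow> 0"
    unfolding B_def by (rule summable_LIMSEQ_zero[OF summable_disc_val[OF mg \<sigma> mu]])
  then have sB: "(\<lambda>k. ?q ^ Suc k * B (Suc k) - ?q ^ k * B k) sums (0 - B 0)"
    using telescope_sums by fastforce
  have backup: "joint_expect G \<sigma> s (backup G r W s)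
      = joint_expect G \<sigma> s (r s) + ?q * joint_expect G \<sigma> s (\<lambda>a. \<Sum>x\<in>states G. trans G s a x * W x)" for s
    by (simp add: distrib_left sum.distrib sum_distrib_left mult.left_commute)
  have advantage: "(\<Sum>s\<in>states G. ?d k s * (joint_expect G \<sigma> s (backup G r W s) - W s))
      = A k + ?q * B (Suc k) - B k" for k
    unfolding A_def B_def state_dist_Suc_expectation backup
    by (simp add: right_diff_distrib distrib_left sum.distrib sum_subtractf sum_distrib_left
        mult.left_commute)
  have key: "?q ^ k * A k + (?q ^ Suc k * B (Suc k) - ?q ^ k * B k) =
     ?q ^ k * (\<Sum>s\<in>states G. ?d k s * (joint_expect G \<sigma> s (backup G r W s) - W s))" for k
    unfolding advantage by (simp add: algebra_simps)
  have "(\<lambda>k. ?q ^ k * (\<Sum>s\<in>states G. ?d k s * (joint_expect G \<sigma> s (backup G r W s) - W s)))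
      sums (disc_val G \<sigma> mu r + (0 - B 0))"
    using sums_add[OF sA sB] by (simp only: key)
  then show ?thesis unfolding B_def by simp
qed

lemma Vt_bellman:
  assumes mg: "markov_game G" and \<sigma>: "valid_profile G \<sigma>" and s: "s \<in> states G" and i: "i \<in> players G"
  shows "Vt G tau i s \<sigma> = joint_expect G \<sigma> s (backup G (rew G i) (\<lambda>x. Vt G tau i x \<sigma>) s)
      - tau * negent G i (\<sigma> i s)"
proof -
  let ?c = "tau * negent G i (\<sigma> i s)"
  have "Vt G tau i s \<sigma>
      = joint_expect G \<sigma> s (\<lambda>a. backup G (rew G i) (\<lambda>x. Vt G tau i x \<sigma>) s a - ?c)"
    unfolding Vt_def by (rule disc_val_bellman[OF mg \<sigma> s, THEN trans]) (simp add: algebra_simps)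
  also have "\<dots> = joint_expect G \<sigma> s (backup G (rew G i) (\<lambda>x. Vt G tau i x \<sigma>) s)
      - (\<Sum>a\<in>joint_acts G. joint_prob G \<sigma> s a) * ?c"
    by (simp only: right_diff_distrib sum_subtractf sum_distrib_right)
  finally show ?thesis using prob_simplex_sum[OF joint_prob_in_prob_simplex[OF mg \<sigma> s]] by simp
qed

lemma joint_expect_update_backup_Vt:
  assumes mg: "markov_game G" and \<sigma>: "valid_profile G \<sigma>" and s: "s \<in> states G"
    and i: "i \<in> players G" and p: "p \<in> Pol G i"
  shows "joint_expect G (\<sigma>(i := p)) s (backup G (rew G i) (\<lambda>x. Vt G tau i x \<sigma>) s)
      = Qtp G tau i s (p s) \<sigma> + tau * negent G i (\<sigma> i s)"
proof -
  let ?B = "PiE (players G - {i}) (acts G)"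
  let ?P = "\<lambda>b. \<Prod>j\<in>players G - {i}. \<sigma> j s (b j)"
  let ?X = "\<lambda>ai. \<Sum>b\<in>?B. ?P b * backup G (rew G i) (\<lambda>x. Vt G tau i x \<sigma>) s (b(i := ai))"
  let ?c = "tau * negent G i (\<sigma> i s)"
  have ps: "p s \<in> prob_simplex (acts G i)" using p s unfolding Pol_def by auto
  have "Qt G tau i s ai \<sigma> = (\<Sum>b\<in>?B. ?P b * backup G (rew G i) (\<lambda>x. Vt G tau i x \<sigma>) s (b(i := ai))
      - ?P b * ?c)" for ai
    unfolding Qt_def by (intro sum.cong refl) (simp add: algebra_simps)
  then have "Qt G tau i s ai \<sigma> = ?X ai - (\<Sum>b\<in>?B. ?P b) * ?c" for ai
    by (simp only: sum_subtractf sum_distrib_right)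
  then have "Qt G tau i s ai \<sigma> = ?X ai - ?c" for ai
    using prob_simplex_sum[OF others_prob_in_prob_simplex[OF mg \<sigma> s]] by simp
  then have "Qtp G tau i s (p s) \<sigma> = (\<Sum>ai\<in>acts G i. p s ai * ?X ai - p s ai * ?c)"
    unfolding Qtp_def by (simp add: right_diff_distrib)
  then have "Qtp G tau i s (p s) \<sigma> = (\<Sum>ai\<in>acts G i. p s ai * ?X ai) - (\<Sum>ai\<in>acts G i. p s ai) * ?c"
    by (simp only: sum_subtractf sum_distrib_right)
  moreover have "joint_expect G (\<sigma>(i := p)) s (backup G (rew G i) (\<lambda>x. Vt G tau i x \<sigma>) s)
      = (\<Sum>ai\<in>acts G i. p s ai * ?X ai)"
    using joint_expect_split[OF markov_gameD(1)[OF mg] i, of "\<sigma>(i := p)"] by simp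
  ultimately show ?thesis using prob_simplex_sum[OF ps] by simp
qed

lemma Vt_eq_Qtp:
  assumes "markov_game G" "valid_profile G \<sigma>" "s \<in> states G" "i \<in> players G"
  shows "Vt G tau i s \<sigma> = Qtp G tau i s (\<sigma> i s) \<sigma>"
proof -
  have "\<sigma> i \<in> Pol G i" using assms(2,4) unfolding valid_profile_def by blast
  then show ?thesis
    using Vt_bellman[OF assms, of tau] joint_expect_update_backup_Vt[OF assms, of "\<sigma> i" tau] by simp
qed

lemma Gap_ge:
  assumes mg: "markov_game G" and tau: "0 \<le> tau" and i: "i \<in> players G"
    and q: "q \<in> prob_simplex (acts G i)"
  shows "(Qtp G tau i s q \<sigma> - tau * negent G i q) - (Qtp G tau i s (\<sigma> i s) \<sigma> - tau * negent G i (\<sigma> i s))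
     \<le> Gap G tau \<sigma> i s"
proof -
  have "bdd_above ((\<lambda>p. Qtp G tau i s p \<sigma> - tau * negent G i p) ` prob_simplex (acts G i))"
  proof (rule bdd_aboveI2)
    fix p assume p: "p \<in> prob_simplex (acts G i)"
    have "Qtp G tau i s p \<sigma> \<le> (\<Sum>a\<in>acts G i. \<bar>Qt G tau i s a \<sigma>\<bar>)"
      using abs_expectation_le[OF p, of "\<lambda>a. Qt G tau i s a \<sigma>"] unfolding Qtp_def by simp
    moreover have "- (tau * negent G i p) \<le> tau * ln (real (card (acts G i)))"
      using mult_left_mono[OF negent_ge[OF p] tau] by simp
    ultimately show "Qtp G tau i s p \<sigma> - tau * negent G i p \<le>
      (\<Sum>a\<in>acts G i. \<bar>Qt G tau i s a \<sigma>\<bar>) + tau * ln (real (card (acts G i)))" by simp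
  qed
  then show ?thesis unfolding Gap_def using cSUP_upper[OF q] by simp
qed

subsection \<open>Value of a unilateral deviation\<close>

lemma V_ge_regularized_value:
  assumes mg: "markov_game G" and tau: "0 \<le> tau" and \<sigma>: "valid_profile G \<sigma>"
    and mu: "mu \<in> prob_simplex (states G)" and i: "i \<in> players G"
  shows "- (tau * ln (real (card (acts G i)))) / (1 - disc G)
      \<le> V G i mu \<sigma> - (\<Sum>s\<in>states G. mu s * Vt G tau i s \<sigma>)"
proof (rule sums_geometric_ge)
  show "(\<lambda>k. disc G ^ k * (\<Sum>s\<in>states G. state_dist G \<sigma> mu k s *
      (joint_expect G \<sigma> s (backup G (rew G i) (\<lambda>x. Vt G tau i x \<sigma>) s) - Vt G tau i s \<sigma>)))
    sums (V G i mu \<sigma> - (\<Sum>s\<in>states G. mu s * Vt G tau i s \<sigma>))"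
    unfolding V_def by (rule disc_val_telescope[OF mg \<sigma> mu])
  show "- (tau * ln (real (card (acts G i)))) \<le> (\<Sum>s\<in>states G. state_dist G \<sigma> mu k s *
      (joint_expect G \<sigma> s (backup G (rew G i) (\<lambda>x. Vt G tau i x \<sigma>) s) - Vt G tau i s \<sigma>))" for k
  proof (rule expectation_ge_const[OF state_dist_in_prob_simplex[OF mg \<sigma> mu]])
    fix s assume s: "s \<in> states G"
    show "- (tau * ln (real (card (acts G i))))
        \<le> joint_expect G \<sigma> s (backup G (rew G i) (\<lambda>x. Vt G tau i x \<sigma>) s) - Vt G tau i s \<sigma>"
      using Vt_bellman[OF mg \<sigma> s i, of tau]
        mult_left_mono[OF negent_ge[OF valid_profileD[OF \<sigma> i s]] tau] by simp
  qed
qed (use markov_gameD[OF mg] in auto)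

lemma V_deviation_le_regularized_value:
  assumes mg: "markov_game G" and tau: "0 \<le> tau" and \<sigma>: "valid_profile G \<sigma>"
    and mu: "mu \<in> prob_simplex (states G)" and i: "i \<in> players G" and p: "p \<in> Pol G i"
    and D: "\<And>s. s \<in> states G \<Longrightarrow> Gap G tau \<sigma> i s \<le> D"
  shows "V G i mu (\<sigma>(i := p)) - (\<Sum>s\<in>states G. mu s * Vt G tau i s \<sigma>) \<le> D / (1 - disc G)"
proof (rule sums_geometric_le)
  have \<sigma>': "valid_profile G (\<sigma>(i := p))" using valid_profile_update[OF \<sigma> p] .
  show "(\<lambda>k. disc G ^ k * (\<Sum>s\<in>states G. state_dist G (\<sigma>(i := p)) mu k s *
      (joint_expect G (\<sigma>(i := p)) s (backup G (rew G i) (\<lambda>x. Vt G tau i x \<sigma>) s) - Vt G tau i s \<sigma>)))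
    sums (V G i mu (\<sigma>(i := p)) - (\<Sum>s\<in>states G. mu s * Vt G tau i s \<sigma>))"
    unfolding V_def by (rule disc_val_telescope[OF mg \<sigma>' mu])
  show "(\<Sum>s\<in>states G. state_dist G (\<sigma>(i := p)) mu k s *
      (joint_expect G (\<sigma>(i := p)) s (backup G (rew G i) (\<lambda>x. Vt G tau i x \<sigma>) s) - Vt G tau i s \<sigma>))
      \<le> D" for k
  proof (rule expectation_le_const[OF state_dist_in_prob_simplex[OF mg \<sigma>' mu]])
    fix s assume s: "s \<in> states G"
    have ps: "p s \<in> prob_simplex (acts G i)" using p s unfolding Pol_def by auto
    have "tau * negent G i (p s) \<le> 0" using tau negent_nonpos[OF ps] by (rule mult_nonneg_nonpos)
    then show "joint_expect G (\<sigma>(i := p)) s (backup G (rew G i) (\<lambda>x. Vt G tau i x \<sigma>) s)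
        - Vt G tau i s \<sigma> \<le> D"
      using joint_expect_update_backup_Vt[OF mg \<sigma> s i p, of tau] Vt_eq_Qtp[OF mg \<sigma> s i, of tau]
        Gap_ge[OF mg tau i ps, of s \<sigma>] D[OF s] by linarith
  qed
qed (use markov_gameD[OF mg] in auto)

lemma V_deviation_gain_le:
  assumes "markov_game G" "0 \<le> tau" "valid_profile G \<sigma>" "mu \<in> prob_simplex (states G)"
    "i \<in> players G" "p \<in> Pol G i" "\<And>s. s \<in> states G \<Longrightarrow> Gap G tau \<sigma> i s \<le> D"
  shows "V G i mu (\<sigma>(i := p)) - V G i mu \<sigma>
      \<le> (D + tau * ln (real (card (acts G i)))) / (1 - disc G)"
  using V_deviation_le_regularized_value[OF assms] V_ge_regularized_value[OF assms(1-5)]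
    markov_gameD(6)[OF assms(1)] by (simp add: add_divide_distrib)

lemma BR_in_prob_simplex:
  assumes "finite (acts G i)" "acts G i \<noteq> {}"
  shows "BR G tau pol i s \<in> prob_simplex (acts G i)"
proof -
  let ?Z = "\<Sum>a\<in>acts G i. exp (Qt G tau i s a pol / tau)"
  have "?Z > 0" using assms by (intro sum_pos) auto
  then show ?thesis
    unfolding prob_simplex_def BR_def by (simp add: sum_divide_distrib[symmetric] less_imp_le)
qed

lemma smisbr_run_valid_profile:
  assumes mg: "markov_game G" and run: "smisbr_run G tau pit ib sb t"
  shows "k \<le> t \<Longrightarrow> valid_profile G (pit k)"
proof (induction k)
  case 0
  have "pit 0 j s \<in> prob_simplex (acts G j)" if j: "j \<in> players G" and s: "s \<in> states G" for j s
  proof (rule prob_simplex_cong)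
    show "(\<lambda>_. 1 / real (card (acts G j))) \<in> prob_simplex (acts G j)"
      using markov_gameD(3,4)[OF mg j] by (rule uniform_in_prob_simplex)
    show "pit 0 j s a = 1 / real (card (acts G j))" if "a \<in> acts G j" for a
      using run j s that unfolding smisbr_run_def by blast
  qed
  then show ?case unfolding valid_profile_def Pol_def by blast
next
  case (Suc k)
  then have k: "k < t" and \<sigma>: "valid_profile G (pit k)" by auto
  have update: "\<forall>j\<in>players G. \<forall>s\<in>states G. \<forall>a\<in>acts G j. pit (Suc k) j s a =
      (if j = ib k \<and> s = sb k then BR G tau (pit k) j s a else pit k j s a)"
    using run k unfolding smisbr_run_def by blast
  have "pit (Suc k) j s \<in> prob_simplex (acts G j)" if j: "j \<in> players G" and s: "s \<in> states G" for j s
  proof (cases "j = ib k \<and> s = sb k")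
    case True
    show ?thesis
    proof (rule prob_simplex_cong)
      show "BR G tau (pit k) j s \<in> prob_simplex (acts G j)"
        using markov_gameD(3,4)[OF mg j] by (rule BR_in_prob_simplex)
      show "pit (Suc k) j s a = BR G tau (pit k) j s a" if "a \<in> acts G j" for a
        using update j s that True by simp
    qed
  next
    case False
    show ?thesis
    proof (rule prob_simplex_cong)
      show "pit k j s \<in> prob_simplex (acts G j)" using valid_profileD[OF \<sigma> j s] .
      show "pit (Suc k) j s a = pit k j s a" if "a \<in> acts G j" for a
        using update j s that False by auto
    qed
  qed
  then show ?case unfolding valid_profile_def Pol_def by blast
qed

lemma ln_card_acts_le_ln_maxA:
  assumes "markov_game G" "i \<in> players G"
  shows "0 \<le> ln (real (card (acts G i)))" "ln (real (card (acts G i))) \<le> ln (real (maxA G))"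
proof -
  have pos: "0 < card (acts G i)" using markov_gameD(3,4)[OF assms] by (simp add: card_gt_0_iff)
  then show "0 \<le> ln (real (card (acts G i)))" by simp
  have "card (acts G i) \<le> maxA G"
    unfolding maxA_def using markov_gameD(1)[OF assms(1)] assms(2) by (intro Max_ge) auto
  then show "ln (real (card (acts G i))) \<le> ln (real (maxA G))" using pos by simp
qed

theorem mainTheorem13:
  fixes G :: "('i, 's, 'a) mgame" and tau :: real and mu :: "'s \<Rightarrow> real"
    and pit :: "nat \<Rightarrow> ('i, 's, 'a) profile" and ib :: "nat \<Rightarrow> 'i" and sb :: "nat \<Rightarrow> 's"
    and t :: nat
  assumes "markov_game G"
    and "tau > 0"
    and "mu \<in> prob_simplex (states G)"
    and "smisbr_run G tau pit ib sb t"
    and "not_stopped G tau (pit t)"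
    and "is_argmax_gap G tau (pit t) (ib t) (sb t)"
  shows "\<forall>i\<in>players G.
     (SUP p\<in>Pol G i. V G i mu ((pit t)(i := p))) - V G i mu (pit t)
       \<le> 1 / (1 - disc G) * (Gap G tau (pit t) (ib t) (sb t) + 2 * tau * ln (real (maxA G)))"
proof
  fix i assume i: "i \<in> players G"
  let ?D = "Gap G tau (pit t) (ib t) (sb t)"
  have \<sigma>: "valid_profile G (pit t)" using smisbr_run_valid_profile[OF assms(1,4)] by simp
  have gain: "V G i mu ((pit t)(i := p)) - V G i mu (pit t)
      \<le> (?D + 2 * tau * ln (real (maxA G))) / (1 - disc G)" if p: "p \<in> Pol G i" for p
  proof -
    have "V G i mu ((pit t)(i := p)) - V G i mu (pit t)
        \<le> (?D + tau * ln (real (card (acts G i)))) / (1 - disc G)"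
      using assms(2,6) i unfolding is_argmax_gap_def
      by (intro V_deviation_gain_le[OF assms(1) _ \<sigma> assms(3) i p]) auto
    also have "\<dots> \<le> (?D + 2 * tau * ln (real (maxA G))) / (1 - disc G)"
      using ln_card_acts_le_ln_maxA[OF assms(1) i] assms(2) markov_gameD(6)[OF assms(1)]
      by (intro divide_right_mono) (auto intro: order_trans[OF mult_left_mono])
    finally show ?thesis .
  qed
  have "Pol G i \<noteq> {}" using \<sigma> i unfolding valid_profile_def by blast
  then have "(SUP p\<in>Pol G i. V G i mu ((pit t)(i := p)))
      \<le> (?D + 2 * tau * ln (real (maxA G))) / (1 - disc G) + V G i mu (pit t)"
    using gain by (intro cSUP_least) (simp_all add: diff_le_eq)
  then show "(SUP p\<in>Pol G i. V G i mu ((pit t)(i := p))) - V G i mu (pit t)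
      \<le> 1 / (1 - disc G) * (?D + 2 * tau * ln (real (maxA G)))"
    by simp
qed

end
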